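(* Let $P$ be an $n\times n$ sign pattern and $A\in\mathcal{Q}(P)$. If $A$ has the nSSP, then there is $\epsilon>0$ such that for every $M\in M_n(\mathbb{R})$ with $\|M-A\|<\epsilon$ there exists $A'\in\mathcal{Q}(P)$ such that $A'$ is similar to $M$ and $A'$ has the nSSP.
   Context: $M_n(\mathbb{R})$ is the set of real $n\times n$ matrices and $\|\cdot\|$ the Frobenius norm. A sign pattern is an array with entries in $\{+,-,0\}$; its qualitative class $\mathcal{Q}(P)$ is the set of real matrices of the same size whose entries have the signs prescribed by $P$. $\circ$ is the entrywise product. A matrix $A\in M_n(\mathbb{R})$ has the non-symmetric strong spectral property (nSSP) if $X=O$ is the only matrix $X\in M_n(\mathbb{R})$ with $A\circ X=O$ and $AX^\top-X^\top A=O$. *)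

theory Defs
  imports "HOL-Analysis.Analysis"
begin

datatype sgn_entry = Pos | Neg | Zero

type_synonym 'n sign_pattern = "'n \<Rightarrow> 'n \<Rightarrow> sgn_entry"

definition has_sign :: "real \<Rightarrow> sgn_entry \<Rightarrow> bool" where
  "has_sign x s = (case s of Pos \<Rightarrow> x > 0 | Neg \<Rightarrow> x < 0 | Zero \<Rightarrow> x = 0)"

definition qual_class :: "'n::finite sign_pattern \<Rightarrow> (real^'n^'n) set" where
  "qual_class P = {A. \<forall>i j. has_sign (A $ i $ j) (P i j)}"

definition hadamard :: "real^'n^'m \<Rightarrow> real^'n^'m \<Rightarrow> real^'n^'m" where
  "hadamard A B = (\<chi> i j. A $ i $ j * B $ i $ j)"

definition nSSP :: "real^'n^'n \<Rightarrow> bool" where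
  "nSSP A \<longleftrightarrow> (\<forall>X :: real^'n^'n.
      hadamard A X = 0 \<and> A ** transpose X - transpose X ** A = 0 \<longrightarrow> X = 0)"

definition similar_matrix :: "real^'n^'n \<Rightarrow> real^'n^'n \<Rightarrow> bool" where
  "similar_matrix A B \<longleftrightarrow> (\<exists>S :: real^'n^'n. invertible S \<and> A = matrix_inv S ** B ** S)"

end

theory Submission
  imports Defs
begin

text \<open>Perturbing \<open>A\<close> slightly inside its support keeps it in \<open>\<Q>(P)\<close>. By duality, the nSSP
  says exactly that the tangent space \<open>{XA - AX}\<close> of the similarity orbit of \<open>A\<close> and the matrices
  supported on the support of \<open>A\<close> together span all of \<open>M\<^sub>n(\<real>)\<close>. So the map
  \<open>(X, Z, Y) \<mapsto> ((I + X)(I + Z), (I + X)(A + E \<circ> Y)(I + Z))\<close> is a submersion at \<open>0\<close>, and by the open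
  mapping theorem its image contains a neighbourhood of \<open>(I, A)\<close>: every \<open>M\<close> near \<open>A\<close> is similar to
  some \<open>A + E \<circ> Y\<close> with \<open>Y\<close> small. Finally, having only the trivial solution of the nSSP equations
  is an open condition on the matrix once the zero pattern is fixed.\<close>

lemma matrix_add_rdistrib: "(A + B) ** C = A ** C + B ** (C :: 'a::semiring_1^'p^'n)"
  by (vector matrix_matrix_mult_def sum.distrib[symmetric] field_simps)

lemma matrix_diff_ldistrib: "C ** (A - B) = C ** A - C ** (B :: 'a::ring_1^'p^'n)"
  by (vector matrix_matrix_mult_def sum_subtractf[symmetric] field_simps)

lemma bounded_bilinear_matrix_matrix_mult [bounded_bilinear]:
  "bounded_bilinear ((**) :: real^'n::finite^'m::finite \<Rightarrow> real^'p::finite^'n \<Rightarrow> real^'p^'m)"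
  unfolding bilinear_conv_bounded_bilinear[symmetric] bilinear_def
  by (auto intro!: linearI simp: matrix_add_ldistrib matrix_add_rdistrib
      scalar_matrix_assoc matrix_scalar_ac)

lemma bounded_linear_transpose [bounded_linear]:
  "bounded_linear (transpose :: real^'n::finite^'m::finite \<Rightarrow> _)"
  unfolding linear_conv_bounded_linear[symmetric]
  by (auto intro!: linearI simp: vec_eq_iff transpose_def)

lemma hadamard_nth [simp]: "hadamard A B $ i $ j = A $ i $ j * B $ i $ j"
  by (simp add: hadamard_def)

lemma hadamard_zero_right [simp]: "hadamard E 0 = 0"
  by (simp add: vec_eq_iff)

lemma bounded_linear_hadamard [bounded_linear]:
  "bounded_linear (hadamard (E :: real^'n::finite^'m::finite))"
  unfolding linear_conv_bounded_linear[symmetric]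
  by (auto intro!: linearI simp: vec_eq_iff algebra_simps)

lemma inner_hadamard_right:
  "inner Z (hadamard E Y) = inner (hadamard E Z) (Y :: real^'n::finite^'m::finite)"
  by (simp add: inner_vec_def mult_ac)

lemma inner_commutator_right:
  fixes A X Z :: "real^'n::finite^'n"
  shows "inner Z (X ** A - A ** X) = inner (transpose (A ** transpose Z - transpose Z ** A)) X"
proof -
  have XA: "inner Z (X ** A) = inner (transpose (A ** transpose Z)) X"
  proof -
    have "inner Z (X ** A) = (\<Sum>i\<in>UNIV. \<Sum>j\<in>UNIV. \<Sum>k\<in>UNIV. Z$i$j * X$i$k * A$k$j)"
      by (simp add: inner_vec_def matrix_matrix_mult_def sum_distrib_left mult.assoc)
    also have "\<dots> = (\<Sum>i\<in>UNIV. \<Sum>k\<in>UNIV. \<Sum>j\<in>UNIV. Z$i$j * X$i$k * A$k$j)"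
      by (rule sum.cong[OF refl], rule sum.swap)
    also have "\<dots> = inner (transpose (A ** transpose Z)) X"
      by (simp add: inner_vec_def matrix_matrix_mult_def transpose_def
          sum_distrib_left sum_distrib_right mult_ac)
    finally show ?thesis .
  qed
  have AX: "inner Z (A ** X) = inner (transpose (transpose Z ** A)) X"
  proof -
    have "inner Z (A ** X) = (\<Sum>i\<in>UNIV. \<Sum>j\<in>UNIV. \<Sum>k\<in>UNIV. Z$i$j * A$i$k * X$k$j)"
      by (simp add: inner_vec_def matrix_matrix_mult_def sum_distrib_left mult.assoc)
    also have "\<dots> = (\<Sum>i\<in>UNIV. \<Sum>k\<in>UNIV. \<Sum>j\<in>UNIV. Z$i$j * A$i$k * X$k$j)"
      by (rule sum.cong[OF refl], rule sum.swap)
    also have "\<dots> = (\<Sum>k\<in>UNIV. \<Sum>i\<in>UNIV. \<Sum>j\<in>UNIV. Z$i$j * A$i$k * X$k$j)"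
      by (rule sum.swap)
    also have "\<dots> = (\<Sum>k\<in>UNIV. \<Sum>j\<in>UNIV. \<Sum>i\<in>UNIV. Z$i$j * A$i$k * X$k$j)"
      by (rule sum.cong[OF refl], rule sum.swap)
    also have "\<dots> = inner (transpose (transpose Z ** A)) X"
      by (simp add: inner_vec_def matrix_matrix_mult_def transpose_def
          sum_distrib_left sum_distrib_right mult_ac)
    finally show ?thesis .
  qed
  show ?thesis
    by (simp add: inner_diff_right inner_diff_left XA AX
        linear_diff[OF bounded_linear.linear[OF bounded_linear_transpose]])
qed

lemma matrix_inv_unique:
  fixes S T :: "'a::semiring_1^'n^'n"
  assumes "S ** T = mat 1" "T ** S = mat 1"
  shows "matrix_inv S = T"
proof -
  have "S ** matrix_inv S = mat 1 \<and> matrix_inv S ** S = mat 1"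
    unfolding matrix_inv_def by (rule someI[of _ T]) (use assms in auto)
  then have "T = T ** (S ** matrix_inv S)" by simp
  also have "\<dots> = matrix_inv S" by (simp add: matrix_mul_assoc assms(2))
  finally show ?thesis by simp
qed

lemma similar_matrix_if_conj:
  fixes S T B M :: "real^'n::finite^'n"
  assumes ST: "S ** T = mat 1" and M: "S ** B ** T = M"
  shows "similar_matrix B M"
  unfolding similar_matrix_def
proof (intro exI conjI)
  have TS: "T ** S = mat 1"
    using ST matrix_left_right_inverse by blast
  then show "invertible S"
    using ST invertible_def by blast
  have "matrix_inv S ** M ** S = (T ** S) ** B ** (T ** S)"
    unfolding matrix_inv_unique[OF ST TS] M[symmetric] by (simp add: matrix_mul_assoc)
  then show "B = matrix_inv S ** M ** S"
    by (simp add: TS)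
qed

definition support_mask :: "real^'n^'m \<Rightarrow> real^'n^'m" where
  "support_mask A = (\<chi> i j. if A $ i $ j = 0 then 0 else 1)"

lemma hadamard_eq_0_iff: "hadamard A W = 0 \<longleftrightarrow> (\<forall>i j. A $ i $ j \<noteq> 0 \<longrightarrow> W $ i $ j = 0)"
  by (auto simp: vec_eq_iff)

lemma hadamard_support_mask_eq_0_iff: "hadamard (support_mask A) W = 0 \<longleftrightarrow> hadamard A W = 0"
  by (simp add: hadamard_eq_0_iff support_mask_def)

lemma qual_class_same_zeros:
  assumes "A \<in> qual_class P" "B \<in> qual_class P"
  shows "A $ i $ j = 0 \<longleftrightarrow> B $ i $ j = 0"
proof -
  have "has_sign (A $ i $ j) (P i j)" "has_sign (B $ i $ j) (P i j)"
    using assms by (simp_all add: qual_class_def)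
  then show ?thesis
    by (cases "P i j") (auto simp: has_sign_def)
qed

lemma qual_class_hadamard_eq_0_iff:
  assumes "A \<in> qual_class P" "B \<in> qual_class P"
  shows "hadamard A W = 0 \<longleftrightarrow> hadamard B W = 0"
  using qual_class_same_zeros[OF assms] by (simp add: hadamard_eq_0_iff)

lemma qual_class_support_perturbation:
  fixes A :: "real^'n::finite^'n"
  assumes "A \<in> qual_class P"
  obtains \<delta> where "\<delta> > 0" "\<And>Y. norm Y < \<delta> \<Longrightarrow> A + hadamard (support_mask A) Y \<in> qual_class P"
proof -
  define K where "K = {(i, j). A $ i $ j \<noteq> 0}"
  define \<delta> where "\<delta> = (if K = {} then 1 else Min ((\<lambda>(i, j). \<bar>A $ i $ j\<bar>) ` K))"
  have small: "\<bar>Y $ i $ j\<bar> < \<bar>A $ i $ j\<bar>"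
    if "norm Y < \<delta>" "A $ i $ j \<noteq> 0" for Y :: "real^'n^'n" and i j
  proof -
    have "\<bar>Y $ i $ j\<bar> \<le> norm Y"
      using component_le_norm_cart Finite_Cartesian_Product.norm_nth_le order_trans by blast
    also have "\<dots> < \<delta>" by (fact that(1))
    also have "\<delta> \<le> \<bar>A $ i $ j\<bar>"
      using that(2) unfolding \<delta>_def K_def by (auto intro!: Min_le)
    finally show ?thesis .
  qed
  show ?thesis
  proof (rule that)
    show "\<delta> > 0"
      unfolding \<delta>_def K_def by (auto simp: finite_image_iff)
    fix Y :: "real^'n^'n"
    assume Y: "norm Y < \<delta>"
    show "A + hadamard (support_mask A) Y \<in> qual_class P"
      unfolding qual_class_def
    proof (intro CollectI allI)
      fix i j
      have "has_sign (A $ i $ j) (P i j)"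
        using assms by (simp add: qual_class_def)
      then show "has_sign ((A + hadamard (support_mask A) Y) $ i $ j) (P i j)"
        using small[OF Y, of i j]
        by (cases "P i j") (auto simp: has_sign_def support_mask_def abs_less_iff)
    qed
  qed
qed

lemma open_nSSP_condition:
  fixes Z :: "real^'n::finite^'n"
  shows "open {B. \<forall>X. hadamard Z X = 0 \<and> B ** transpose X - transpose X ** B = 0 \<longrightarrow> X = 0}"
    (is "open ?N")
proof -
  define T :: "((real^'n^'n) \<times> (real^'n^'n)) set"
    where "T = {(X, B). hadamard Z X = 0 \<and> B ** transpose X - transpose X ** B = 0}"
  have "closed T"
    unfolding T_def case_prod_unfold
    by (intro closed_Collect_conj closed_Collect_eq continuous_intros)
  then have "closed {B. \<exists>X. X \<in> sphere 0 1 \<and> (X, B) \<in> T}"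
    using closed_compact_projection[OF compact_sphere] by blast
  moreover have "- ?N = {B. \<exists>X. X \<in> sphere 0 1 \<and> (X, B) \<in> T}"
  proof (intro set_eqI iffI)
    fix B
    assume "B \<in> - ?N"
    then obtain X where X: "X \<noteq> 0" "hadamard Z X = 0" "B ** transpose X - transpose X ** B = 0"
      by blast
    have "hadamard Z (X /\<^sub>R norm X) = 0"
      using X(2) by (simp add: linear_cmul[OF bounded_linear.linear[OF bounded_linear_hadamard]])
    moreover have "B ** transpose (X /\<^sub>R norm X) - transpose (X /\<^sub>R norm X) ** B = 0"
      using X(3) by (simp add: transpose_scalar matrix_scalar_ac scalar_matrix_assoc[symmetric]
          scaleR_diff_right[symmetric])
    ultimately show "B \<in> {B. \<exists>X. X \<in> sphere 0 1 \<and> (X, B) \<in> T}"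
      using X(1) by (auto simp: T_def intro!: exI[of _ "X /\<^sub>R norm X"])
  qed (auto simp: T_def)
  ultimately show ?thesis
    by (simp add: open_closed)
qed

lemma nSSP_iff_qual_class:
  assumes "A \<in> qual_class P" "B \<in> qual_class P"
  shows "nSSP B \<longleftrightarrow> (\<forall>X. hadamard A X = 0 \<and> B ** transpose X - transpose X ** B = 0 \<longrightarrow> X = 0)"
  using qual_class_hadamard_eq_0_iff[OF assms] unfolding nSSP_def by blast

lemma exists_orthogonal_to_range:
  fixes f :: "'a::real_vector \<Rightarrow> 'b::euclidean_space"
  assumes "linear f" "\<not> surj f"
  obtains z where "z \<noteq> 0" "\<And>x. inner z (f x) = 0"
proof -
  have "span (range f) = range f"
    using linear_subspace_image[OF assms(1) subspace_UNIV] by (simp add: span_eq_iff)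
  then have "span (range f) \<subset> span UNIV"
    using assms(2) unfolding psubset_eq span_UNIV by (metis subset_UNIV)
  then obtain z where "z \<noteq> 0" "\<And>y. y \<in> span (range f) \<Longrightarrow> orthogonal z y"
    by (rule orthogonal_to_subspace_exists_gen) blast
  then show ?thesis
    using that by (simp add: orthogonal_def span_base)
qed

lemma nSSP_imp_surj_linearization:
  fixes A :: "real^'n::finite^'n"
  assumes "nSSP A"
  shows "surj (\<lambda>(X, Y). X ** A - A ** X + hadamard (support_mask A) Y)" (is "surj ?L")
proof (rule ccontr)
  assume not_surj: "\<not> surj ?L"
  have "linear ?L"
    unfolding case_prod_unfold by (intro bounded_linear.linear bounded_linear_intros)
  then obtain Z where "Z \<noteq> 0" and orth: "\<And>p. inner Z (?L p) = 0"
    using exists_orthogonal_to_range[OF _ not_surj] by blast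
  define C where "C = A ** transpose Z - transpose Z ** A"
  define W where "W = hadamard (support_mask A) Z"
  \<comment> \<open>Testing \<open>Z\<close> against the image at \<open>(C\<^sup>T, 0)\<close> and \<open>(0, W)\<close> yields the nSSP
      equations for \<open>Z\<close>.\<close>
  have "inner (transpose C) (transpose C) = inner Z (?L (transpose C, 0))"
    by (simp add: inner_commutator_right C_def)
  then have "inner (transpose C) (transpose C) = 0"
    using orth[of "(transpose C, 0)"] by simp
  then have "C = 0"
    by (metis inner_eq_zero_iff transpose_transpose
        linear_0[OF bounded_linear.linear[OF bounded_linear_transpose]])
  moreover have "inner W W = inner Z (?L (0, W))"
    by (simp add: inner_hadamard_right W_def)
  then have "inner W W = 0"
    using orth[of "(0, W)"] by simp
  then have "hadamard A Z = 0"
    by (simp add: W_def hadamard_support_mask_eq_0_iff)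
  ultimately have "Z = 0"
    using assms unfolding nSSP_def C_def by blast
  with \<open>Z \<noteq> 0\<close> show False ..
qed

lemma similar_perturbation_nearby:
  fixes A :: "real^'n::finite^'n" and h :: "'b::real_normed_vector \<Rightarrow> real^'n^'n"
  assumes h: "bounded_linear h"
    and surj: "surj (\<lambda>(X, Y). X ** A - A ** X + h Y)"
    and S: "open S" "0 \<in> S"
  obtains e where "e > 0" "\<And>M. norm (M - A) < e \<Longrightarrow> \<exists>Y\<in>S. similar_matrix (A + h Y) M"
proof -
  note h [bounded_linear]
  let ?I = "mat 1 :: real^'n^'n"
  let ?L = "\<lambda>(X, Y). X ** A - A ** X + h Y"
  \<comment> \<open>The first component forces \<open>I + Z = (I + X)\<^sup>-\<^sup>1\<close>, so the second is a similarity
      transform of \<open>A + h Y\<close>; this avoids differentiating the matrix inverse.\<close>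
  define F where "F = (\<lambda>x :: (real^'n^'n) \<times> (real^'n^'n) \<times> 'b.
    ((?I + fst x) ** (?I + fst (snd x)),
     (?I + fst x) ** (A + h (snd (snd x))) ** (?I + fst (snd x))))"
  define F' where "F' = (\<lambda>x :: (real^'n^'n) \<times> (real^'n^'n) \<times> 'b.
    (fst x + fst (snd x), fst x ** A + h (snd (snd x)) + A ** fst (snd x)))"
  have "linear ?L"
    unfolding case_prod_unfold by (intro bounded_linear.linear bounded_linear_intros)
  then obtain g where "linear g" and Lg: "?L \<circ> g = id"
    using linear_surjective_right_inverse[OF _ surj] by blast
  then have g [bounded_linear]: "bounded_linear g"
    by (simp add: linear_conv_bounded_linear)
  define G where "G = (\<lambda>p :: (real^'n^'n) \<times> (real^'n^'n).
    (fst (g (snd p - A ** fst p)), fst p - fst (g (snd p - A ** fst p)),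
     snd (g (snd p - A ** fst p))))"
  have der: "(F has_derivative F') (at 0)"
    unfolding F_def
    by (auto intro!: derivative_eq_intros
        simp: F'_def fun_eq_iff linear_0[OF bounded_linear.linear[OF h]] algebra_simps)
  have cont: "continuous_on UNIV F"
    unfolding F_def by (intro continuous_intros)
  have lin: "bounded_linear G"
    unfolding G_def by (intro bounded_linear_intros)
  have inv: "F' \<circ> G = id"
  proof
    fix p :: "(real^'n^'n) \<times> (real^'n^'n)"
    let ?v = "snd p - A ** fst p"
    have "fst (g ?v) ** A - A ** fst (g ?v) + h (snd (g ?v)) = ?v"
      using fun_cong[OF Lg, of ?v] by (simp add: case_prod_unfold)
    then show "(F' \<circ> G) p = id p"
      by (simp add: F'_def G_def matrix_diff_ldistrib algebra_simps)
  qed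
  have opn: "open (UNIV \<times> UNIV \<times> S)" and zero: "0 \<in> UNIV \<times> UNIV \<times> S"
    using S by (auto simp: open_Times zero_prod_def)
  have "F 0 \<in> interior (F ` (UNIV \<times> UNIV \<times> S))"
    by (rule sussmann_open_mapping[OF opn continuous_on_subset[OF cont subset_UNIV] zero der lin inv
          order_refl])
      (simp add: interior_open[OF opn] zero)
  moreover have "F 0 = (?I, A)"
    by (simp add: F_def linear_0[OF bounded_linear.linear[OF h]])
  ultimately obtain e where "e > 0" and e: "ball (?I, A) e \<subseteq> F ` (UNIV \<times> UNIV \<times> S)"
    by (metis mem_interior)
  show ?thesis
  proof (rule that[OF \<open>e > 0\<close>])
    fix M :: "real^'n^'n"
    assume "norm (M - A) < e"
    then have "(?I, M) \<in> ball (?I, A) e"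
      by (simp add: dist_Pair_Pair dist_norm norm_minus_commute)
    then obtain X Z Y where "Y \<in> S" and "F (X, Z, Y) = (?I, M)"
      using e by auto
    then show "\<exists>Y\<in>S. similar_matrix (A + h Y) M"
      using similar_matrix_if_conj[of "?I + X" "?I + Z"] by (auto simp: F_def)
  qed
qed

theorem theorem5p2:
  fixes P :: "'n::finite sign_pattern" and A :: "real^'n^'n"
  assumes "A \<in> qual_class P" and "nSSP A"
  shows "\<exists>\<epsilon>>0. \<forall>M :: real^'n^'n. norm (M - A) < \<epsilon> \<longrightarrow>
           (\<exists>A' \<in> qual_class P. similar_matrix A' M \<and> nSSP A')"
proof -
  let ?E = "support_mask A"
  let ?N = "{B. \<forall>X. hadamard A X = 0 \<and> B ** transpose X - transpose X ** B = 0 \<longrightarrow> X = 0}"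
  obtain \<delta> where "\<delta> > 0" and in_class: "\<And>Y. norm Y < \<delta> \<Longrightarrow> A + hadamard ?E Y \<in> qual_class P"
    using qual_class_support_perturbation[OF assms(1)] by blast
  define S where "S = ball 0 \<delta> \<inter> (\<lambda>Y. A + hadamard ?E Y) -` ?N"
  have "open S"
    unfolding S_def by (intro open_Int open_ball open_vimage open_nSSP_condition continuous_intros)
  moreover have "0 \<in> S"
    using \<open>\<delta> > 0\<close> assms(2) by (simp add: S_def nSSP_def)
  ultimately obtain e where "e > 0"
    and near: "\<And>M. norm (M - A) < e \<Longrightarrow> \<exists>Y\<in>S. similar_matrix (A + hadamard ?E Y) M"
    using similar_perturbation_nearby[OF bounded_linear_hadamard nSSP_imp_surj_linearization[OF assms(2)]]
    by blast
  have "\<exists>A' \<in> qual_class P. similar_matrix A' M \<and> nSSP A'" if M: "norm (M - A) < e" for M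
  proof -
    obtain Y where "Y \<in> S" and "similar_matrix (A + hadamard ?E Y) M"
      using near[OF M] by blast
    moreover from \<open>Y \<in> S\<close> have "A + hadamard ?E Y \<in> qual_class P"
      by (simp add: S_def in_class)
    moreover from calculation have "nSSP (A + hadamard ?E Y)"
      by (simp add: nSSP_iff_qual_class[OF assms(1)] S_def)
    ultimately show ?thesis by blast
  qed
  with \<open>e > 0\<close> show ?thesis by blast
qed

end
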